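(* Under the empirical-coordination polar coding scheme described in the context, for every block $i\in\{1,\dots,k\}$, $$\mathbb{V}\big(q_{X^{1:N}Y^{1:N}},\widetilde p_{X_i^{1:N}Y_i^{1:N}}\big)\le\sqrt{2\log 2}\,\sqrt{N\delta_N}.$$
   Context: All logarithms are base 2. $\mathbb{V}(p,q)=\sum_x|p(x)-q(x)|$ is the variational distance. For a vector $a^{1:N}$ and index set $\mathcal{A}\subseteq\{1,\dots,N\}$, $a^{1:N}[\mathcal{A}]$ is the subvector indexed by $\mathcal{A}$. Setting (empirical coordination scheme): Let $\mathcal{X},\mathcal{Y}$ be finite alphabets with $|\mathcal{Y}|$ prime, identified with $\mathbb{F}_{|\mathcal{Y}|}$, and $q_{XY}$ a target joint distribution. Let $N=2^n$, $G_n=\begin{bmatrix}1&0\\1&1\end{bmatrix}^{\otimes n}$ over $\mathbb{F}_{|\mathcal{Y}|}$, $(X^{1:N},Y^{1:N})$ i.i.d. $q_{XY}$ (law $q_{X^{1:N}Y^{1:N}}$), and $U^{1:N}=Y^{1:N}G_n$. Fix $\beta\in(0,1/2)$, $\delta_N=2^{-N^\beta}$, and $\mathcal{H}_Y=\{j: H(U^j|U^{1:j-1})>\delta_N\}$, $\mathcal{V}_{Y|X}=\{j: H(U^j|U^{1:j-1}X^{1:N})>\log|\mathcal{Y}|-\delta_N\}$. Node 1 observes, in each block $i\in\{1,\dots,k\}$, $X_i^{1:N}$ i.i.d. $q_X$ (independent across blocks). Common randomness $C_1$ uniform on $\mathcal{Y}^{|\mathcal{V}_{Y|X}|}$ is shared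 by both nodes. In block $i$, Node 1 sets $\widetilde U_i^{1:N}[\mathcal{V}_{Y|X}]=C_1$ (same in all blocks) and, for the remaining indices $j$ in increasing order, draws $\widetilde U_i^j$ according to $q_{U^j|U^{1:j-1}X^{1:N}}(\cdot|\widetilde U_i^{1:j-1},X_i^{1:N})$ if $j\in\mathcal{H}_Y\setminus\mathcal{V}_{Y|X}$ and according to $q_{U^j|U^{1:j-1}}(\cdot|\widetilde U_i^{1:j-1})$ if $j\notin\mathcal{H}_Y$. Node 1 sends $M_i=\widetilde U_i^{1:N}[\mathcal{H}_Y\setminus\mathcal{V}_{Y|X}]$ together with the randomness $\widetilde C_i$ used to draw $\widetilde U_i^{1:N}[\mathcal{H}_Y^c]$; Node 2 thus reconstructs $\widetilde U_i^{1:N}$ and outputs $\widetilde Y_i^{1:N}=\widetilde U_i^{1:N}G_n$. $\widetilde p_{X_i^{1:N}Y_i^{1:N}}$ is the joint law of $(X_i^{1:N},\widetilde Y_i^{1:N})$. *)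

theory Defs
  imports "HOL-Probability.Probability" "HOL-Library.FuncSet"
begin

fun iid_pmf :: "nat \<Rightarrow> 'a pmf \<Rightarrow> 'a list pmf" where
  "iid_pmf 0 P = return_pmf []"
| "iid_pmf (Suc m) P = bind_pmf P (\<lambda>a. map_pmf (\<lambda>as. a # as) (iid_pmf m P))"

(* conditional entropy H(A|B) in bits for a joint law of (A,B) with finite support *)
definition cond_entropy :: "('a \<times> 'b) pmf \<Rightarrow> real" where
  "cond_entropy P = (\<Sum>z\<in>set_pmf P. pmf P z * log 2 (pmf (map_pmf snd P) (snd z) / pmf P z))"

definition var_dist :: "'a pmf \<Rightarrow> 'a pmf \<Rightarrow> real" where
  "var_dist P Q = (\<Sum>\<^sub>\<infinity>z. \<bar>pmf P z - pmf Q z\<bar>)"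

(* conditional law of A given B = b from a joint law of (A,B); fallback d if P(B=b)=0 *)
definition cond_dist :: "('a \<times> 'b) pmf \<Rightarrow> 'b \<Rightarrow> 'a \<Rightarrow> 'a pmf" where
  "cond_dist P b d = (if b \<in> snd ` set_pmf P then map_pmf fst (cond_pmf P {z. snd z = b})
                      else return_pmf d)"

(* kernel F = [[1,0],[1,1]] on indices {0,1} *)
definition polar_kernel :: "nat \<Rightarrow> nat \<Rightarrow> nat" where
  "polar_kernel a b = (if a = 0 \<and> b = 1 then 0 else 1)"

(* G_n = F^{\<otimes> n}, entries indexed by 0..2^n-1, G_n = F \<otimes> G_{n-1} *)
fun polar_G :: "nat \<Rightarrow> nat \<Rightarrow> nat \<Rightarrow> nat" where
  "polar_G 0 a b = 1"
| "polar_G (Suc n) a b = polar_kernel (a div 2^n) (b div 2^n) * polar_G n (a mod 2^n) (b mod 2^n)"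

definition polar_transform :: "nat \<Rightarrow> nat \<Rightarrow> nat list \<Rightarrow> nat list" where
  "polar_transform p n y = map (\<lambda>b. (\<Sum>a<2^n. y ! a * polar_G n a b) mod p) [0..<2^n]"

definition polar_inverse :: "nat \<Rightarrow> nat \<Rightarrow> nat list \<Rightarrow> nat list" where
  "polar_inverse p n u = (THE y. length y = 2^n \<and> set y \<subseteq> {..<p} \<and> polar_transform p n y = u)"

definition target_law :: "nat \<Rightarrow> ('x \<times> nat) pmf \<Rightarrow> ('x list \<times> nat list) pmf" where
  "target_law n q = map_pmf (\<lambda>l. (map fst l, map snd l)) (iid_pmf (2^n) q)"

definition XU_law :: "nat \<Rightarrow> nat \<Rightarrow> ('x \<times> nat) pmf \<Rightarrow> ('x list \<times> nat list) pmf" where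
  "XU_law p n q = map_pmf (\<lambda>(x, y). (x, polar_transform p n y)) (target_law n q)"

definition delta :: "nat \<Rightarrow> real \<Rightarrow> real" where
  "delta n \<beta> = 2 powr (- (real (2^n) powr \<beta>))"

(* 0-based index j: U^{j+1} in the paper is u ! j, U^{1:j} is take j u *)
definition law_U_prefix :: "nat \<Rightarrow> nat \<Rightarrow> ('x \<times> nat) pmf \<Rightarrow> nat \<Rightarrow> (nat \<times> nat list) pmf" where
  "law_U_prefix p n q j = map_pmf (\<lambda>(x, u). (u ! j, take j u)) (XU_law p n q)"

definition law_U_prefix_X :: "nat \<Rightarrow> nat \<Rightarrow> ('x \<times> nat) pmf \<Rightarrow> nat \<Rightarrow> (nat \<times> (nat list \<times> 'x list)) pmf" where
  "law_U_prefix_X p n q j = map_pmf (\<lambda>(x, u). (u ! j, (take j u, x))) (XU_law p n q)"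

definition H_set :: "nat \<Rightarrow> nat \<Rightarrow> real \<Rightarrow> ('x \<times> nat) pmf \<Rightarrow> nat set" where
  "H_set p n \<beta> q = {j. j < 2^n \<and> cond_entropy (law_U_prefix p n q j) > delta n \<beta>}"

definition V_set :: "nat \<Rightarrow> nat \<Rightarrow> real \<Rightarrow> ('x \<times> nat) pmf \<Rightarrow> nat set" where
  "V_set p n \<beta> q = {j. j < 2^n \<and> cond_entropy (law_U_prefix_X p n q j) > log 2 (real p) - delta n \<beta>}"

(* sequential generation of the first j entries of \<tilde>U given common randomness c and x *)
fun sample_U :: "nat \<Rightarrow> nat \<Rightarrow> real \<Rightarrow> ('x \<times> nat) pmf \<Rightarrow> (nat \<Rightarrow> nat) \<Rightarrow> 'x list \<Rightarrow> nat \<Rightarrow> nat list pmf" where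
  "sample_U p n \<beta> q c x 0 = return_pmf []"
| "sample_U p n \<beta> q c x (Suc j) =
     bind_pmf (sample_U p n \<beta> q c x j) (\<lambda>pre. map_pmf (\<lambda>v. pre @ [v])
       (if j \<in> V_set p n \<beta> q then return_pmf (c j)
        else if j \<in> H_set p n \<beta> q then cond_dist (law_U_prefix_X p n q j) (pre, x) 0
        else cond_dist (law_U_prefix p n q j) pre 0))"

definition block_pmf :: "nat \<Rightarrow> nat \<Rightarrow> real \<Rightarrow> ('x \<times> nat) pmf \<Rightarrow> (nat \<Rightarrow> nat) \<Rightarrow> ('x list \<times> nat list) pmf" where
  "block_pmf p n \<beta> q c = bind_pmf (iid_pmf (2^n) (map_pmf fst q))
     (\<lambda>x. map_pmf (\<lambda>u. (x, polar_inverse p n u)) (sample_U p n \<beta> q c x (2^n)))"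

fun blocks_pmf :: "nat \<Rightarrow> nat \<Rightarrow> real \<Rightarrow> ('x \<times> nat) pmf \<Rightarrow> (nat \<Rightarrow> nat) \<Rightarrow> nat \<Rightarrow> ('x list \<times> nat list) list pmf" where
  "blocks_pmf p n \<beta> q c 0 = return_pmf []"
| "blocks_pmf p n \<beta> q c (Suc m) = bind_pmf (block_pmf p n \<beta> q c)
     (\<lambda>b. map_pmf (\<lambda>bs. b # bs) (blocks_pmf p n \<beta> q c m))"

(* whole scheme over k blocks: C_1 uniform on Y^{V_{Y|X}}, shared by all blocks *)
definition scheme_pmf :: "nat \<Rightarrow> nat \<Rightarrow> real \<Rightarrow> ('x \<times> nat) pmf \<Rightarrow> nat \<Rightarrow> ('x list \<times> nat list) list pmf" where
  "scheme_pmf p n \<beta> q k = bind_pmf (pmf_of_set (PiE (V_set p n \<beta> q) (\<lambda>_. {..<p})))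
     (\<lambda>c. blocks_pmf p n \<beta> q c k)"

(* \<tilde>p_{X_i Y_i}, blocks numbered 1..k *)
definition block_law :: "nat \<Rightarrow> nat \<Rightarrow> real \<Rightarrow> ('x \<times> nat) pmf \<Rightarrow> nat \<Rightarrow> nat \<Rightarrow> ('x list \<times> nat list) pmf" where
  "block_law p n \<beta> q k i = map_pmf (\<lambda>bs. bs ! (i - 1)) (scheme_pmf p n \<beta> q k)"

end

theory Submission
  imports Defs
begin

(* The encoder's joint law of (X, U~) differs from the target law of (X, U) = (X, Y G_n) only at
   the indices where it does not sample the true conditional q(u_j | u_1..u_(j-1), x): on the
   frozen set V_{Y|X} it uses the uniform common randomness, and outside H_Y it uses
   q(u_j | u_1..u_(j-1)).  By the chain rule the Kullback-Leibler divergence D(q_XU || p_XU~) is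
   the sum over j of the expected log-ratios of these step laws, and each is at most ln 2 delta_N,
   because log|Y| - H(U_j | U_1..U_(j-1), X) < delta_N on V_{Y|X} and H(U_j | U_1..U_(j-1)) <= delta_N
   outside H_Y.  Pinsker's inequality turns the total N ln 2 delta_N into the bound, and mapping
   both laws through u -> u G_n^(-1) does not increase the variational distance. *)

section \<open>Pinsker's inequality for finite pmfs\<close>

text \<open>The gap \<open>g(y) = y ln y - y + 1 - 3(y-1)\<^sup>2/(2y+4)\<close> has \<open>g(1) = g'(1) = 0\<close> and
  \<open>g''(y) = 1/y - 27/(y+2)\<^sup>3 \<ge> 0\<close>, since \<open>(y+2)\<^sup>3 - 27y = (y-1)\<^sup>2(y+8)\<close>; hence \<open>g \<ge> 0\<close>.\<close>

lemma ln_minus_pinsker_rational_mono: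
  fixes a b :: real
  assumes "0 < a" "a \<le> b"
  shows "ln a - 3*(a-1)*(a+5)/(2*(a+2)^2) \<le> ln b - 3*(b-1)*(b+5)/(2*(b+2)^2)"
proof (rule DERIV_nonneg_imp_nondecreasing[OF assms(2)])
  fix y :: real
  assume "a \<le> y" "y \<le> b"
  hence y: "y > 0" using assms by simp
  have "((\<lambda>y. ln y - 3*(y-1)*(y+5)/(2*(y+2)^2)) has_real_derivative
        (1/y - (3*((1*(y+5) + (y-1)*1)*(2*(y+2)^2)) - 3*(y-1)*(y+5)*(2*(2*(y+2)*1)))/(2*(y+2)^2)^2)) (at y)"
    using y by (auto intro!: derivative_eq_intros simp: power2_eq_square)
  moreover have "(3*((1*(y+5) + (y-1)*1)*(2*(y+2)^2)) - 3*(y-1)*(y+5)*(2*(2*(y+2)*1)))/(2*(y+2)^2)^2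
      = 27/(y+2)^3"
  proof -
    have "(2*(y+2)^2)^2 \<noteq> 0" "(y+2)^3 \<noteq> 0" using y by auto
    thus ?thesis by (simp add: frac_eq_eq power2_eq_square power3_eq_cube algebra_simps)
  qed
  moreover have "27/(y+2)^3 \<le> 1/y"
  proof -
    have "(y+2)^3 - 27*y = (y-1)^2*(y+8)"
      by (simp add: power2_eq_square power3_eq_cube algebra_simps)
    moreover have "(y-1)^2*(y+8) \<ge> 0" using y by simp
    ultimately have "27*y \<le> (y+2)^3" by linarith
    thus ?thesis using y by (simp add: field_simps)
  qed
  ultimately show "\<exists>D. ((\<lambda>y. ln y - 3*(y-1)*(y+5)/(2*(y+2)^2)) has_real_derivative D) (at y) \<and> 0 \<le> D"
    by auto
qed

lemma pinsker_gap_has_derivative: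
  assumes "(y::real) > 0"
  shows "((\<lambda>y. y * ln y - y + 1 - 3*(y-1)^2/(2*y+4)) has_real_derivative
           (ln y - 3*(y-1)*(y+5)/(2*(y+2)^2))) (at y)"
proof -
  have "((\<lambda>y. y * ln y - y + 1 - 3*(y-1)^2/(2*y+4)) has_real_derivative
     (1 * ln y + y * (1/y) - 1 + 0 - (3*(2*(y-1)*1)*(2*y+4) - 3*(y-1)^2*2)/(2*y+4)^2)) (at y)"
    using assms by (auto intro!: derivative_eq_intros simp: power2_eq_square)
  moreover have "(3*(2*(y-1)*1)*(2*y+4) - 3*(y-1)^2*2)/(2*y+4)^2 = 3*(y-1)*(y+5)/(2*(y+2)^2)"
  proof -
    have "(2*y+4)^2 \<noteq> 0" "2*(y+2)^2 \<noteq> 0" using assms by auto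
    thus ?thesis by (simp add: frac_eq_eq power2_eq_square algebra_simps)
  qed
  ultimately show ?thesis using assms by simp
qed

lemma pinsker_pointwise:
  fixes x :: real
  assumes "0 \<le> x"
  shows "3*(x-1)^2 \<le> (2*x+4)*(x * ln x - x + 1)"
proof (cases "x = 0")
  case False
  hence x: "x > 0" using assms by simp
  let ?g = "\<lambda>y::real. y * ln y - y + 1 - 3*(y-1)^2/(2*y+4)"
  have "?g 1 \<le> ?g x"
  proof (cases "x \<ge> 1")
    case True
    show ?thesis
    proof (rule DERIV_nonneg_imp_nondecreasing[OF True])
      fix y assume "1 \<le> y" "y \<le> x"
      thus "\<exists>D. (?g has_real_derivative D) (at y) \<and> 0 \<le> D"
        using pinsker_gap_has_derivative[of y] ln_minus_pinsker_rational_mono[of 1 y] by auto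
    qed
  next
    case False
    show ?thesis
    proof (rule DERIV_nonpos_imp_nonincreasing[of x 1 ?g])
      show "x \<le> 1" using False by simp
      fix y assume "x \<le> y" "y \<le> 1"
      thus "\<exists>D. (?g has_real_derivative D) (at y) \<and> D \<le> 0"
        using pinsker_gap_has_derivative[of y] ln_minus_pinsker_rational_mono[of y 1] x by auto
    qed
  qed
  thus ?thesis using x by (simp add: field_simps)
qed simp

lemma var_dist_eq_sum:
  assumes "finite S" "set_pmf P \<subseteq> S" "set_pmf Q \<subseteq> S"
  shows "var_dist P Q = (\<Sum>z\<in>S. \<bar>pmf P z - pmf Q z\<bar>)"
proof -
  have "pmf P z = 0" "pmf Q z = 0" if "z \<notin> S" for z
    using that assms(2,3) by (auto simp: pmf_eq_0_set_pmf)
  hence "var_dist P Q = infsum (\<lambda>z. \<bar>pmf P z - pmf Q z\<bar>) S"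
    unfolding var_dist_def by (intro infsum_cong_neutral) auto
  thus ?thesis using assms(1) by simp
qed

definition KL_pmf :: "'a pmf \<Rightarrow> 'a pmf \<Rightarrow> real" where
  "KL_pmf P R = measure_pmf.expectation P (\<lambda>z. ln (pmf P z / pmf R z))"

lemma pinsker_gap_nonneg:
  fixes x :: real
  assumes "0 \<le> x"
  shows "0 \<le> x * ln x - x + 1"
proof -
  have "(2*x+4) * 0 \<le> (2*x+4)*(x * ln x - x + 1)"
    by (rule order_trans[OF _ pinsker_pointwise[OF assms]]) simp
  moreover have "0 < 2*x+4"
    using assms by simp
  ultimately show ?thesis
    by (simp only: mult_le_cancel_left_pos)
qed

lemma relative_gap_nonneg:
  fixes s r :: real
  assumes "0 \<le> s" "0 < r"
  shows "0 \<le> s * ln (s / r) - s + r"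
proof -
  have "s * ln (s / r) - s + r = r * ((s / r) * ln (s / r) - s / r + 1)"
    using assms(2) by (simp add: algebra_simps)
  thus ?thesis
    using assms pinsker_gap_nonneg[of "s / r"] by simp
qed

lemma pinsker_pointwise_scaled:
  fixes s r :: real
  assumes "0 \<le> s" "0 < r"
  shows "\<bar>s - r\<bar> \<le> sqrt ((2 * s + 4 * r) / 3) * sqrt (s * ln (s / r) - s + r)"
proof -
  define x where "x = s / r"
  have s: "s = r * x" and x: "0 \<le> x"
    using assms by (simp_all add: x_def)
  have gap: "s * ln (s / r) - s + r = r * (x * ln x - x + 1)"
    unfolding x_def[symmetric] by (simp add: s algebra_simps)
  have "\<bar>s - r\<bar>^2 = r^2 * (x - 1)^2"
    by (simp add: s power2_eq_square algebra_simps)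
  also have "\<dots> \<le> r^2 * ((2*x+4)*(x * ln x - x + 1) / 3)"
    using pinsker_pointwise[OF x] by (intro mult_left_mono) auto
  also have "\<dots> = ((2 * s + 4 * r) / 3) * (s * ln (s / r) - s + r)"
    unfolding gap by (simp add: s power2_eq_square algebra_simps)
  also have "\<dots> = (sqrt ((2 * s + 4 * r) / 3) * sqrt (s * ln (s / r) - s + r))^2"
    using assms relative_gap_nonneg[OF assms] by (simp add: power_mult_distrib)
  finally have "\<bar>s - r\<bar>^2 \<le> (sqrt ((2 * s + 4 * r) / 3) * sqrt (s * ln (s / r) - s + r))^2" .
  moreover have "0 \<le> sqrt ((2 * s + 4 * r) / 3) * sqrt (s * ln (s / r) - s + r)"
    using assms relative_gap_nonneg[OF assms] by simp
  ultimately show ?thesis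
    by (rule power2_le_imp_le)
qed

text \<open>By \<open>pinsker_pointwise_scaled\<close> and Cauchy-Schwarz, \<open>V(P, R)\<^sup>2\<close> is at most the product of
  \<open>\<Sum> (2P + 4R)/3 = 2\<close> and \<open>\<Sum> (P ln (P/R) - P + R)\<close>, which is the divergence.\<close>

theorem pinsker_pmf:
  assumes fin: "finite (set_pmf R)" and sub: "set_pmf P \<subseteq> set_pmf R"
  shows "var_dist P R \<le> sqrt (2 * KL_pmf P R)"
proof -
  define S where "S = set_pmf R"
  define a where "a z = sqrt ((2 * pmf P z + 4 * pmf R z) / 3)" for z
  define b where "b z = sqrt (pmf P z * ln (pmf P z / pmf R z) - pmf P z + pmf R z)" for z
  have R_pos: "pmf R z > 0" if "z \<in> S" for z
    using that unfolding S_def by (simp add: pmf_positive)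
  have P_sum: "(\<Sum>z\<in>S. pmf P z) = 1"
    using fin sub by (intro sum_pmf_eq_1) (auto simp: S_def)
  have R_sum: "(\<Sum>z\<in>S. pmf R z) = 1"
    using fin by (intro sum_pmf_eq_1) (auto simp: S_def)
  have "var_dist P R = (\<Sum>z\<in>S. \<bar>pmf P z - pmf R z\<bar>)"
    using fin sub by (intro var_dist_eq_sum) (simp_all add: S_def)
  also have "\<dots> \<le> (\<Sum>z\<in>S. a z * b z)"
    unfolding a_def b_def using R_pos by (intro sum_mono pinsker_pointwise_scaled) auto
  finally have "var_dist P R ^ 2 \<le> (\<Sum>z\<in>S. a z * b z)^2"
    by (rule power_mono) (simp add: var_dist_def infsum_nonneg)
  also have "\<dots> \<le> (\<Sum>z\<in>S. (a z)^2) * (\<Sum>z\<in>S. (b z)^2)"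
    by (rule Cauchy_Schwarz_ineq_sum)
  also have "(\<Sum>z\<in>S. (a z)^2) = 2"
  proof -
    have "(\<Sum>z\<in>S. (a z)^2) = (\<Sum>z\<in>S. 2 * pmf P z + 4 * pmf R z) / 3"
      unfolding a_def by (simp add: sum_divide_distrib)
    also have "\<dots> = (2 * (\<Sum>z\<in>S. pmf P z) + 4 * (\<Sum>z\<in>S. pmf R z)) / 3"
      by (simp only: sum.distrib sum_distrib_left)
    finally show ?thesis by (simp add: P_sum R_sum)
  qed
  also have "(\<Sum>z\<in>S. (b z)^2) = KL_pmf P R"
  proof -
    have "(b z)^2 = pmf P z * ln (pmf P z / pmf R z) - pmf P z + pmf R z" if "z \<in> S" for z
      using relative_gap_nonneg[OF pmf_nonneg R_pos[OF that]] by (simp add: b_def)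
    hence "(\<Sum>z\<in>S. (b z)^2) = (\<Sum>z\<in>S. pmf P z * ln (pmf P z / pmf R z) - pmf P z + pmf R z)"
      by (rule sum.cong[OF refl])
    also have "\<dots> = (\<Sum>z\<in>S. ln (pmf P z / pmf R z) * pmf P z)"
      by (simp only: sum.distrib sum_subtractf P_sum R_sum mult.commute)
    also have "\<dots> = KL_pmf P R"
      unfolding KL_pmf_def using fin sub
      by (intro integral_measure_pmf_real[symmetric]) (auto simp: S_def)
    finally show ?thesis .
  qed
  finally show ?thesis
    by (simp add: real_le_rsqrt)
qed

section \<open>Expectations and conditionals of pmfs with finite support\<close>

lemma expectation_pmf_finite:
  "finite (set_pmf M) \<Longrightarrow> measure_pmf.expectation M f = (\<Sum>z\<in>set_pmf M. f z * pmf M z)"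
  by (rule integral_measure_pmf_real) auto

lemma expectation_pmf_cong:
  "finite (set_pmf M) \<Longrightarrow> (\<And>z. z \<in> set_pmf M \<Longrightarrow> f z = g z) \<Longrightarrow>
    measure_pmf.expectation M f = measure_pmf.expectation M (g :: _ \<Rightarrow> real)"
  by (simp add: expectation_pmf_finite)

lemma expectation_pmf_mono:
  "finite (set_pmf M) \<Longrightarrow> (\<And>z. z \<in> set_pmf M \<Longrightarrow> f z \<le> g z) \<Longrightarrow>
    measure_pmf.expectation M f \<le> measure_pmf.expectation M (g :: _ \<Rightarrow> real)"
  by (simp add: expectation_pmf_finite sum_mono mult_right_mono)

lemma expectation_pmf_add_const:
  assumes "finite (set_pmf M)"
  shows "measure_pmf.expectation M (\<lambda>z. f z + c) = measure_pmf.expectation M f + (c :: real)"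
proof -
  have "(\<Sum>z\<in>set_pmf M. (f z + c) * pmf M z) = (\<Sum>z\<in>set_pmf M. f z * pmf M z) + c * (\<Sum>z\<in>set_pmf M. pmf M z)"
    by (simp add: algebra_simps sum.distrib sum_distrib_left)
  also have "(\<Sum>z\<in>set_pmf M. pmf M z) = 1"
    using assms by (rule sum_pmf_eq_1) simp
  finally show ?thesis
    using assms by (simp add: expectation_pmf_finite)
qed

lemma expectation_pmf_sum:
  "finite (set_pmf M) \<Longrightarrow>
   measure_pmf.expectation M (\<lambda>z. \<Sum>j\<in>I. g j z) = (\<Sum>j\<in>I. measure_pmf.expectation M (g j) :: real)"
  by (simp add: expectation_pmf_finite sum_distrib_right sum.swap[of _ I])

lemma pmf_map_eq_sum:
  assumes "finite S" "set_pmf A \<subseteq> S"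
  shows "pmf (map_pmf f A) w = (\<Sum>z\<in>{z\<in>S. f z = w}. pmf A z)"
proof -
  have "pmf (map_pmf f A) w = measure_pmf.prob A (f -` {w} \<inter> set_pmf A)"
    by (simp add: pmf_map measure_Int_set_pmf)
  also have "f -` {w} \<inter> set_pmf A = {z\<in>S. f z = w} \<inter> set_pmf A"
    using assms(2) by auto
  also have "measure_pmf.prob A \<dots> = (\<Sum>z\<in>{z\<in>S. f z = w}. pmf A z)"
    using assms(1) by (simp add: measure_Int_set_pmf measure_measure_pmf_finite)
  finally show ?thesis .
qed

lemma var_dist_map_pmf_le:
  assumes "finite (set_pmf A)" "finite (set_pmf B)"
  shows "var_dist (map_pmf f A) (map_pmf f B) \<le> var_dist A B"
proof -
  define S where "S = set_pmf A \<union> set_pmf B"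
  have S: "finite S" "set_pmf A \<subseteq> S" "set_pmf B \<subseteq> S"
    using assms by (auto simp: S_def)
  have "var_dist (map_pmf f A) (map_pmf f B) = (\<Sum>w\<in>f ` S. \<bar>pmf (map_pmf f A) w - pmf (map_pmf f B) w\<bar>)"
    using S by (intro var_dist_eq_sum) auto
  also have "\<dots> = (\<Sum>w\<in>f ` S. \<bar>\<Sum>z\<in>{z\<in>S. f z = w}. pmf A z - pmf B z\<bar>)"
    by (simp add: pmf_map_eq_sum[OF S(1,2)] pmf_map_eq_sum[OF S(1,3)] sum_subtractf)
  also have "\<dots> \<le> (\<Sum>w\<in>f ` S. \<Sum>z\<in>{z\<in>S. f z = w}. \<bar>pmf A z - pmf B z\<bar>)"
    by (intro sum_mono sum_abs)
  also have "\<dots> = (\<Sum>z\<in>S. \<bar>pmf A z - pmf B z\<bar>)"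
    using S(1) by (intro sum.group) auto
  also have "\<dots> = var_dist A B"
    using S by (simp add: var_dist_eq_sum)
  finally show ?thesis .
qed

lemma pmf_bind_eq_single:
  assumes "\<And>a. a \<in> set_pmf A \<Longrightarrow> a \<noteq> b \<Longrightarrow> pmf (f a) z = 0"
  shows "pmf (bind_pmf A f) z = pmf A b * pmf (f b) z"
proof -
  have "pmf (bind_pmf A f) z = (\<Sum>a\<in>{b}. pmf (f a) z * pmf A a)"
    unfolding pmf_bind by (rule integral_measure_pmf_real) (use assms in auto)
  thus ?thesis by simp
qed

lemma pmf_bind_map_snoc:
  "pmf (bind_pmf A (\<lambda>w. map_pmf (\<lambda>v. w @ [v]) (F w))) (w @ [a]) = pmf A w * pmf (F w) a"
proof -
  have "pmf (bind_pmf A (\<lambda>w. map_pmf (\<lambda>v. w @ [v]) (F w))) (w @ [a])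
        = pmf A w * pmf (map_pmf (\<lambda>v. w @ [v]) (F w)) (w @ [a])"
    by (rule pmf_bind_eq_single) (auto simp: pmf_eq_0_set_pmf)
  also have "pmf (map_pmf (\<lambda>v. w @ [v]) (F w)) (w @ [a]) = pmf (F w) a"
    by (rule pmf_map_inj') (auto simp: inj_def)
  finally show ?thesis .
qed

lemma pmf_bind_map_Pair:
  "pmf (bind_pmf A (\<lambda>x. map_pmf (Pair x) (F x))) (x, u) = pmf A x * pmf (F x) u"
proof -
  have "pmf (bind_pmf A (\<lambda>x. map_pmf (Pair x) (F x))) (x, u) = pmf A x * pmf (map_pmf (Pair x) (F x)) (x, u)"
    by (rule pmf_bind_eq_single) (auto simp: pmf_eq_0_set_pmf)
  also have "pmf (map_pmf (Pair x) (F x)) (x, u) = pmf (F x) u"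
    by (rule pmf_map_inj') (auto simp: inj_def)
  finally show ?thesis .
qed

lemma pmf_le_pmf_map: "pmf M z \<le> pmf (map_pmf f M) (f z)"
proof -
  have "pmf M z = measure_pmf.prob M {z}"
    by (simp add: measure_pmf_single)
  also have "\<dots> \<le> measure_pmf.prob M (f -` {f z})"
    by (rule measure_pmf.finite_measure_mono) auto
  finally show ?thesis by (simp add: pmf_map)
qed

lemma map_pmf_map_iid_pmf: "map_pmf (map f) (iid_pmf m P) = iid_pmf m (map_pmf f P)"
proof (induction m)
  case (Suc m)
  thus ?case by (simp add: map_bind_pmf bind_map_pmf map_pmf_comp flip: Suc.IH)
qed simp

lemma set_pmf_iid_pmf: "xs \<in> set_pmf (iid_pmf m P) \<Longrightarrow> length xs = m \<and> set xs \<subseteq> set_pmf P"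
  by (induction m arbitrary: xs) fastforce+

definition cond_prob_pmf :: "('a \<times> 'b) pmf \<Rightarrow> 'a \<times> 'b \<Rightarrow> real" where
  "cond_prob_pmf L z = pmf L z / pmf (map_pmf snd L) (snd z)"

lemma pmf_cond_dist:
  assumes "b \<in> snd ` set_pmf L"
  shows "pmf (cond_dist L b d) a = cond_prob_pmf L (a, b)"
proof -
  define C where "C = cond_pmf L {z. snd z = b}"
  have ne: "set_pmf L \<inter> {z. snd z = b} \<noteq> {}"
    using assms by auto
  have C_set: "set_pmf C = set_pmf L \<inter> {z. snd z = b}"
    unfolding C_def by (rule set_cond_pmf[OF ne])
  have "cond_dist L b d = map_pmf fst C"
    unfolding cond_dist_def C_def using assms by simp
  moreover have "pmf (map_pmf fst C) a = pmf C (a, b)"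
  proof (cases "(a, b) \<in> set_pmf L")
    case True
    have "inj_on fst (set_pmf C)"
      by (auto simp: C_set inj_on_def)
    moreover have "(a, b) \<in> set_pmf C"
      using True by (simp add: C_set)
    ultimately show ?thesis
      using pmf_map_inj by fastforce
  next
    case False
    hence "a \<notin> set_pmf (map_pmf fst C)" "(a, b) \<notin> set_pmf C"
      by (auto simp: C_set)
    thus ?thesis
      by (metis pmf_eq_0_set_pmf)
  qed
  moreover have "measure_pmf.prob L {z. snd z = b} = pmf (map_pmf snd L) b"
    by (simp add: pmf_map vimage_def)
  ultimately show ?thesis
    unfolding cond_prob_pmf_def C_def by (simp add: pmf_cond[OF ne])
qed

lemma set_pmf_cond_dist:
  assumes "a \<in> set_pmf (cond_dist L b d)"
  shows "a = d \<or> (a, b) \<in> set_pmf L"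
proof (cases "b \<in> snd ` set_pmf L")
  case True
  hence "set_pmf L \<inter> {z. snd z = b} \<noteq> {}"
    by auto
  thus ?thesis
    using assms True unfolding cond_dist_def by (auto simp: set_cond_pmf)
next
  case False
  thus ?thesis
    using assms unfolding cond_dist_def by simp
qed

lemma cond_prob_pmf_pos: "z \<in> set_pmf L \<Longrightarrow> cond_prob_pmf L z > 0"
  unfolding cond_prob_pmf_def by (auto intro!: divide_pos_pos pmf_positive)

lemma cond_prob_pmf_le_1: "cond_prob_pmf L z \<le> 1"
  unfolding cond_prob_pmf_def using pmf_le_pmf_map[of L z snd]
  by (cases "pmf (map_pmf snd L) (snd z) = 0") (auto simp: divide_le_eq_1)

lemma expectation_ln_cond_prob_pmf:
  assumes "finite (set_pmf L)"
  shows "measure_pmf.expectation L (\<lambda>z. ln (cond_prob_pmf L z)) = - ln 2 * cond_entropy L"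
proof -
  have "pmf L z * log 2 (pmf (map_pmf snd L) (snd z) / pmf L z) = - ln (cond_prob_pmf L z) * pmf L z / ln 2"
    if "z \<in> set_pmf L" for z
  proof -
    have "pmf L z > 0" "pmf (map_pmf snd L) (snd z) > 0"
      using that by (auto intro!: pmf_positive)
    thus ?thesis
      by (simp add: cond_prob_pmf_def log_def ln_div algebra_simps diff_divide_distrib)
  qed
  hence "cond_entropy L = - (\<Sum>z\<in>set_pmf L. ln (cond_prob_pmf L z) * pmf L z) / ln 2"
    unfolding cond_entropy_def by (simp add: sum_divide_distrib sum_negf)
  thus ?thesis
    using assms by (simp add: expectation_pmf_finite)
qed

section \<open>Invertibility of the polar transform\<close>

lemma mod_add_right_cancel_nat:
  fixes a b c p :: nat
  assumes "(a + c) mod p = (b + c) mod p"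
  shows "a mod p = b mod p"
proof -
  have "int p dvd (int a + int c) - (int b + int c)"
    using assms by (metis of_nat_add of_nat_mod mod_eq_dvd_iff)
  hence "int a mod int p = int b mod int p"
    by (simp add: mod_eq_dvd_iff)
  thus ?thesis by (metis of_nat_mod of_nat_eq_iff)
qed

lemma polar_G_diag: "a < 2^n \<Longrightarrow> polar_G n a a = 1"
  by (induction n arbitrary: a) (auto simp: polar_kernel_def)

lemma polar_G_above_diag: "a < b \<Longrightarrow> b < 2^n \<Longrightarrow> polar_G n a b = 0"
proof (induction n arbitrary: a b)
  case (Suc n)
  have "a div 2^n \<le> b div 2^n"
    using Suc.prems by (simp add: div_le_mono)
  show ?case
  proof (cases "a div 2^n = b div 2^n")
    case True
    hence "a mod 2^n < b mod 2^n"
      using Suc.prems by (metis div_mult_mod_eq add_less_cancel_left)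
    thus ?thesis using Suc.IH[of "a mod 2^n" "b mod 2^n"] by simp
  next
    case False
    moreover have "b div 2^n < 2"
      using Suc.prems by (simp add: less_mult_imp_div_less)
    ultimately have "a div 2^n = 0" "b div 2^n = 1"
      using \<open>a div 2^n \<le> b div 2^n\<close> by auto
    thus ?thesis by (simp add: polar_kernel_def)
  qed
qed simp

lemma length_polar_transform [simp]: "length (polar_transform p n y) = 2^n"
  by (simp add: polar_transform_def)

lemma set_polar_transform: "p > 0 \<Longrightarrow> set (polar_transform p n y) \<subseteq> {..<p}"
  by (auto simp: polar_transform_def)

lemma polar_transform_nth_eq:
  assumes b: "b < 2^n" and above: "\<And>a. b < a \<Longrightarrow> a < 2^n \<Longrightarrow> y ! a = y' ! a"
    and eq: "polar_transform p n y ! b = polar_transform p n y' ! b" and "y ! b < p" "y' ! b < p"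
  shows "y ! b = y' ! b"
proof -
  have split: "(\<Sum>a<2^n. f a * polar_G n a b) = f b + (\<Sum>a\<in>{..<2^n}-{b}. f a * polar_G n a b)"
    for f :: "nat \<Rightarrow> nat"
    using b by (subst sum.remove[of _ b]) (auto simp: polar_G_diag)
  define s where "s = (\<Sum>a\<in>{..<2^n}-{b}. y' ! a * polar_G n a b)"
  have "(\<Sum>a\<in>{..<2^n}-{b}. y ! a * polar_G n a b) = s"
    unfolding s_def
  proof (rule sum.cong[OF refl])
    fix a
    assume a: "a \<in> {..<2^n}-{b}"
    show "y ! a * polar_G n a b = y' ! a * polar_G n a b"
    proof (cases "a < b")
      case True
      thus ?thesis using b polar_G_above_diag[of a b n] by simp
    next
      case False
      thus ?thesis using a above[of a] by simp
    qed
  qed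
  moreover have "(\<Sum>a<2^n. y ! a * polar_G n a b) mod p = (\<Sum>a<2^n. y' ! a * polar_G n a b) mod p"
    using eq b unfolding polar_transform_def by simp
  ultimately have "(y ! b + s) mod p = (y' ! b + s) mod p"
    unfolding split[of "(!) y"] split[of "(!) y'"] s_def[symmetric] by simp
  hence "y ! b mod p = y' ! b mod p"
    by (rule mod_add_right_cancel_nat)
  thus ?thesis
    using assms(4,5) by simp
qed

text \<open>\<open>G\<^sub>n\<close> is lower unitriangular, so \<open>y\<close> is recovered from \<open>y G\<^sub>n\<close> by back substitution,
  from the last entry to the first.\<close>

lemma polar_transform_inj:
  assumes "length y = 2^n" "length y' = 2^n" "set y \<subseteq> {..<p}" "set y' \<subseteq> {..<p}"
    and eq: "polar_transform p n y = polar_transform p n y'"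
  shows "y = y'"
proof -
  have "y ! b = y' ! b" if "b < 2^n" for b
    using that
  proof (induction "2^n - b" arbitrary: b rule: less_induct)
    case less
    have IH: "y ! a = y' ! a" if "b < a" "a < 2^n" for a
      using less.hyps that by auto
    have "y ! b < p" "y' ! b < p"
      using assms(1-4) less.prems by (metis lessThan_iff nth_mem subsetD)+
    thus ?case
      by (intro polar_transform_nth_eq[OF less.prems IH arg_cong[where f = "\<lambda>l. l ! b", OF eq]])
  qed
  thus ?thesis
    using assms(1,2) by (intro nth_equalityI) auto
qed

lemma polar_inverse_polar_transform:
  assumes "length y = 2^n" "set y \<subseteq> {..<p}"
  shows "polar_inverse p n (polar_transform p n y) = y"
  unfolding polar_inverse_def
  by (rule the_equality) (use assms polar_transform_inj in auto)

section \<open>The law of the encoder\<close>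

definition step_kernel ::
    "nat \<Rightarrow> nat \<Rightarrow> real \<Rightarrow> ('x \<times> nat) pmf \<Rightarrow> (nat \<Rightarrow> nat) \<Rightarrow> 'x list \<Rightarrow> nat \<Rightarrow> nat list \<Rightarrow> nat pmf" where
  "step_kernel p n \<beta> q c x j w =
     (if j \<in> V_set p n \<beta> q then return_pmf (c j)
      else if j \<in> H_set p n \<beta> q then cond_dist (law_U_prefix_X p n q j) (w, x) 0
      else cond_dist (law_U_prefix p n q j) w 0)"

lemma sample_U_Suc_step_kernel:
  "sample_U p n \<beta> q c x (Suc j) =
     bind_pmf (sample_U p n \<beta> q c x j) (\<lambda>w. map_pmf (\<lambda>v. w @ [v]) (step_kernel p n \<beta> q c x j w))"
  by (simp add: step_kernel_def)

lemma length_set_pmf_sample_U: "w \<in> set_pmf (sample_U p n \<beta> q c x m) \<Longrightarrow> length w = m"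
  by (induction m arbitrary: w) auto

lemma pmf_sample_U:
  "pmf (sample_U p n \<beta> q c x m) w =
     (if length w = m then (\<Prod>j<m. pmf (step_kernel p n \<beta> q c x j (take j w)) (w ! j)) else 0)"
proof (induction m arbitrary: w)
  case (Suc m)
  show ?case
  proof (cases "length w = Suc m")
    case True
    then obtain w' a where w: "w = w' @ [a]"
      by (metis length_Suc_conv_rev)
    hence "length w' = m" using True by simp
    thus ?thesis
      unfolding sample_U_Suc_step_kernel w pmf_bind_map_snoc
      by (simp add: Suc.IH nth_append)
  next
    case False
    thus ?thesis
      using length_set_pmf_sample_U by (metis pmf_eq_0_set_pmf)
  qed
qed (simp add: pmf_return)

lemma V_set_subset: "V_set p n \<beta> q \<subseteq> {..<2^n}"
  unfolding V_set_def by blast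

lemma finite_V_set: "finite (V_set p n \<beta> q)"
  using V_set_subset by (rule finite_subset) simp

lemma sum_PiE_agree_indicator:
  assumes "finite (PiE V B)"
  shows "(\<Sum>c\<in>PiE V B. if \<forall>j\<in>V. c j = a j then 1 else 0 :: real) = (if \<forall>j\<in>V. a j \<in> B j then 1 else 0)"
proof -
  have "(\<Sum>c\<in>PiE V B. if \<forall>j\<in>V. c j = a j then 1 else 0 :: real) = (\<Sum>c\<in>{c \<in> PiE V B. \<forall>j\<in>V. c j = a j}. 1)"
    using assms by (rule sum.inter_filter[symmetric])
  also have "{c \<in> PiE V B. \<forall>j\<in>V. c j = a j} = (if \<forall>j\<in>V. a j \<in> B j then {restrict a V} else {})"
    by (auto simp: PiE_iff extensional_def restrict_def fun_eq_iff)
  finally show ?thesis by simp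
qed

text \<open>The law of one step of the encoder once the common randomness, uniform on \<open>{..<p}\<close>
  at each frozen index, is averaged out.\<close>

definition step_weight :: "nat \<Rightarrow> nat \<Rightarrow> real \<Rightarrow> ('x \<times> nat) pmf \<Rightarrow> nat \<Rightarrow> nat \<times> nat list \<times> 'x list \<Rightarrow> real" where
  "step_weight p n \<beta> q j = (\<lambda>(a, w, x).
     if j \<in> V_set p n \<beta> q then (if a < p then 1 / real p else 0)
     else if j \<in> H_set p n \<beta> q then pmf (cond_dist (law_U_prefix_X p n q j) (w, x) 0) a
     else pmf (cond_dist (law_U_prefix p n q j) w 0) a)"

definition encoder_XU_law ::
    "nat \<Rightarrow> nat \<Rightarrow> real \<Rightarrow> ('x \<times> nat) pmf \<Rightarrow> (nat \<Rightarrow> nat) \<Rightarrow> ('x list \<times> nat list) pmf" where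
  "encoder_XU_law p n \<beta> q c =
     bind_pmf (iid_pmf (2^n) (map_pmf fst q)) (\<lambda>x. map_pmf (Pair x) (sample_U p n \<beta> q c x (2^n)))"

definition scheme_XU_law :: "nat \<Rightarrow> nat \<Rightarrow> real \<Rightarrow> ('x \<times> nat) pmf \<Rightarrow> ('x list \<times> nat list) pmf" where
  "scheme_XU_law p n \<beta> q =
     bind_pmf (pmf_of_set (PiE (V_set p n \<beta> q) (\<lambda>_. {..<p}))) (encoder_XU_law p n \<beta> q)"

lemma prod_if_zero:
  fixes c :: "'a :: comm_semiring_1"
  shows "finite V \<Longrightarrow> (\<Prod>j\<in>V. if P j then c else 0) = (if \<forall>j\<in>V. P j then c ^ card V else 0)"
  by (induction V rule: finite_induct) auto

lemma pmf_encoder_XU_law: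
  assumes "length u = 2^n"
  shows "pmf (encoder_XU_law p n \<beta> q c) (x, u) =
           pmf (iid_pmf (2^n) (map_pmf fst q)) x
           * (\<Prod>j\<in>{..<2^n} - V_set p n \<beta> q. step_weight p n \<beta> q j (u ! j, take j u, x))
           * (if \<forall>j\<in>V_set p n \<beta> q. c j = u ! j then 1 else 0)"
proof -
  let ?V = "V_set p n \<beta> q"
  let ?K = "\<lambda>j. pmf (step_kernel p n \<beta> q c x j (take j u)) (u ! j)"
  have "(\<Prod>j<2^n. ?K j) = (\<Prod>j\<in>{..<2^n} - ?V. ?K j) * (\<Prod>j\<in>?V. ?K j)"
    using V_set_subset[of p n \<beta> q] by (intro prod.subset_diff) auto
  also have "(\<Prod>j\<in>{..<2^n} - ?V. ?K j) = (\<Prod>j\<in>{..<2^n} - ?V. step_weight p n \<beta> q j (u ! j, take j u, x))"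
    by (rule prod.cong) (auto simp: step_kernel_def step_weight_def)
  also have "(\<Prod>j\<in>?V. ?K j) = (\<Prod>j\<in>?V. if c j = u ! j then 1 else 0)"
    by (rule prod.cong) (auto simp: step_kernel_def pmf_return)
  also have "\<dots> = (if \<forall>j\<in>?V. c j = u ! j then 1 else 0)"
    by (simp only: prod_if_zero[OF finite_V_set] power_one)
  finally show ?thesis
    by (simp add: encoder_XU_law_def pmf_bind_map_Pair pmf_sample_U assms mult.assoc)
qed

lemma pmf_scheme_XU_law:
  assumes "p > 0" "length u = 2^n"
  shows "pmf (scheme_XU_law p n \<beta> q) (x, u) =
           pmf (iid_pmf (2^n) (map_pmf fst q)) x * (\<Prod>j<2^n. step_weight p n \<beta> q j (u ! j, take j u, x))"
proof -
  define V where "V = V_set p n \<beta> q"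
  define C where "C = PiE V (\<lambda>_. {..<p})"
  define I where "I = pmf (iid_pmf (2^n) (map_pmf fst q)) x"
  define A where "A = (\<Prod>j\<in>{..<2^n} - V. step_weight p n \<beta> q j (u ! j, take j u, x))"
  have V: "finite V" "V \<subseteq> {..<2^n}"
    unfolding V_def by (rule finite_V_set, rule V_set_subset)
  have C: "finite C" "C \<noteq> {}" "card C = p ^ card V"
    using V assms(1) by (auto simp: C_def finite_PiE PiE_eq_empty_iff card_PiE)
  have "pmf (scheme_XU_law p n \<beta> q) (x, u) = I * A * (\<Sum>c\<in>C. if \<forall>j\<in>V. c j = u ! j then 1 else 0) / card C"
    unfolding scheme_XU_law_def V_def[symmetric] C_def[symmetric]
    by (simp add: pmf_bind_pmf_of_set C pmf_encoder_XU_law assms(2) sum_distrib_left I_def A_def V_def)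
  also have "\<dots> = I * A * (if \<forall>j\<in>V. u ! j < p then 1 else 0) / p ^ card V"
    using C unfolding C_def by (simp add: sum_PiE_agree_indicator)
  also have "\<dots> = I * (A * (\<Prod>j\<in>V. step_weight p n \<beta> q j (u ! j, take j u, x)))"
  proof -
    have "(\<Prod>j\<in>V. step_weight p n \<beta> q j (u ! j, take j u, x)) = (\<Prod>j\<in>V. if u ! j < p then 1 / real p else 0)"
      by (rule prod.cong) (auto simp: step_weight_def V_def)
    also have "\<dots> = (if \<forall>j\<in>V. u ! j < p then 1 else 0) / p ^ card V"
      by (simp add: prod_if_zero[OF V(1)] power_one_over)
    finally show ?thesis by simp
  qed
  also have "A * (\<Prod>j\<in>V. step_weight p n \<beta> q j (u ! j, take j u, x)) =
             (\<Prod>j<2^n. step_weight p n \<beta> q j (u ! j, take j u, x))"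
    unfolding A_def using V by (intro prod.subset_diff[symmetric]) auto
  finally show ?thesis unfolding I_def .
qed

lemma nth_blocks_pmf:
  "j < m \<Longrightarrow> map_pmf (\<lambda>bs. bs ! j) (blocks_pmf p n \<beta> q c m) = block_pmf p n \<beta> q c"
proof (induction m arbitrary: j)
  case (Suc m)
  thus ?case
    by (cases j) (simp_all add: map_bind_pmf map_pmf_comp map_pmf_const bind_return_pmf' bind_pmf_const)
qed simp

lemma block_law_eq_map_scheme_XU_law:
  assumes "1 \<le> i" "i \<le> k"
  shows "block_law p n \<beta> q k i = map_pmf (\<lambda>(x, u). (x, polar_inverse p n u)) (scheme_XU_law p n \<beta> q)"
proof -
  have "i - 1 < k" using assms by simp
  thus ?thesis
    unfolding block_law_def scheme_pmf_def scheme_XU_law_def map_bind_pmf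
    by (simp add: nth_blocks_pmf block_pmf_def encoder_XU_law_def map_bind_pmf map_pmf_comp)
qed

lemma target_law_eq_map_XU_law:
  assumes "p > 0" "set_pmf q \<subseteq> UNIV \<times> {..<p}"
  shows "target_law n q = map_pmf (\<lambda>(x, u). (x, polar_inverse p n u)) (XU_law p n q)"
proof -
  have "polar_inverse p n (polar_transform p n (map snd l)) = map snd l"
    if "l \<in> set_pmf (iid_pmf (2^n) q)" for l
    using set_pmf_iid_pmf[OF that] assms(2) by (intro polar_inverse_polar_transform) auto
  hence "map_pmf (\<lambda>(x, u). (x, polar_inverse p n u)) (XU_law p n q) = map_pmf id (target_law n q)"
    unfolding XU_law_def target_law_def map_pmf_comp
    by (intro map_pmf_cong) auto
  thus ?thesis by simp
qed

section \<open>Divergence of the encoder from the target law\<close>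

definition XU_space :: "nat \<Rightarrow> nat \<Rightarrow> ('x list \<times> nat list) set" where
  "XU_space p n = {x. length x = 2^n} \<times> {u. length u = 2^n \<and> set u \<subseteq> {..<p}}"

lemma finite_XU_space: "finite (XU_space p n :: ('x::finite list \<times> nat list) set)"
proof -
  have "finite {x :: 'x list. length x = 2^n}"
    using finite_lists_length_eq[of "UNIV :: 'x set" "2^n"] by simp
  moreover have "finite {u. length u = 2^n \<and> set u \<subseteq> {..<p}}"
    using finite_lists_length_eq[of "{..<p}" "2^n"] by (simp add: conj_commute)
  ultimately show ?thesis
    unfolding XU_space_def by (rule finite_cartesian_product)
qed

lemma map_fst_XU_law: "map_pmf fst (XU_law p n q) = iid_pmf (2^n) (map_pmf fst q)"
  unfolding XU_law_def target_law_def
  by (simp add: map_pmf_comp split_beta flip: map_pmf_map_iid_pmf)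

lemma law_U_prefix_eq_map_law_U_prefix_X:
  "law_U_prefix p n q j = map_pmf (\<lambda>(a, w, x). (a, w)) (law_U_prefix_X p n q j)"
  unfolding law_U_prefix_def law_U_prefix_X_def map_pmf_comp by (rule map_pmf_cong) auto

lemma mem_iid_pmf_of_XU_law:
  assumes "(x, u) \<in> set_pmf (XU_law p n q)"
  shows "x \<in> set_pmf (iid_pmf (2^n) (map_pmf fst q))"
proof -
  have "x \<in> fst ` set_pmf (XU_law p n q)"
    using assms by (rule rev_image_eqI) simp
  thus ?thesis by (metis map_fst_XU_law set_map_pmf)
qed

lemma mem_law_U_prefix_of_law_U_prefix_X:
  assumes "z \<in> set_pmf (law_U_prefix_X p n q j)"
  shows "(fst z, fst (snd z)) \<in> set_pmf (law_U_prefix p n q j)"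
  unfolding law_U_prefix_eq_map_law_U_prefix_X set_map_pmf
  by (rule rev_image_eqI[OF assms]) (simp add: split_beta)

lemma mem_law_U_prefix_X:
  "(x, u) \<in> set_pmf (XU_law p n q) \<Longrightarrow> (u ! j, take j u, x) \<in> set_pmf (law_U_prefix_X p n q j)"
  unfolding law_U_prefix_X_def by force

definition step_divergence :: "nat \<Rightarrow> nat \<Rightarrow> real \<Rightarrow> ('x \<times> nat) pmf \<Rightarrow> nat \<Rightarrow> real" where
  "step_divergence p n \<beta> q j = measure_pmf.expectation (law_U_prefix_X p n q j)
     (\<lambda>z. ln (cond_prob_pmf (law_U_prefix_X p n q j) z) - ln (step_weight p n \<beta> q j z))"

context
  fixes p n :: nat and \<beta> :: real and q :: "('x::finite \<times> nat) pmf"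
  assumes p: "p > 0"
begin

lemma set_pmf_XU_law_subset: "set_pmf (XU_law p n q) \<subseteq> XU_space p n"
proof
  fix z
  assume "z \<in> set_pmf (XU_law p n q)"
  then obtain l where l: "l \<in> set_pmf (iid_pmf (2^n) q)" "z = (map fst l, polar_transform p n (map snd l))"
    unfolding XU_law_def target_law_def by auto
  thus "z \<in> XU_space p n"
    using set_pmf_iid_pmf[OF l(1)] set_polar_transform[OF p] by (simp add: XU_space_def)
qed

lemma finite_set_pmf_XU_law: "finite (set_pmf (XU_law p n q))"
  using set_pmf_XU_law_subset finite_XU_space by (rule finite_subset)

lemma length_of_XU_law: "z \<in> set_pmf (XU_law p n q) \<Longrightarrow> length (snd z) = 2^n"
  using set_pmf_XU_law_subset by (auto simp: XU_space_def)

lemma finite_set_pmf_law_U_prefix_X: "finite (set_pmf (law_U_prefix_X p n q j))"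
  unfolding law_U_prefix_X_def using finite_set_pmf_XU_law by simp

lemma finite_set_pmf_law_U_prefix: "finite (set_pmf (law_U_prefix p n q j))"
  unfolding law_U_prefix_def using finite_set_pmf_XU_law by simp

lemma fst_lt_of_law_U_prefix_X:
  assumes "z \<in> set_pmf (law_U_prefix_X p n q j)" "j < 2^n"
  shows "fst z < p"
proof -
  obtain x u where xu: "(x, u) \<in> set_pmf (XU_law p n q)" and z: "z = (u ! j, take j u, x)"
    using assms(1) unfolding law_U_prefix_X_def by auto
  have "length u = 2^n" "set u \<subseteq> {..<p}"
    using set_pmf_XU_law_subset xu by (auto simp: XU_space_def)
  thus ?thesis
    using assms(2) z by (metis fst_conv lessThan_iff nth_mem subsetD)
qed

lemma fst_lt_of_law_U_prefix:
  "z \<in> set_pmf (law_U_prefix p n q j) \<Longrightarrow> j < 2^n \<Longrightarrow> fst z < p"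
  unfolding law_U_prefix_eq_map_law_U_prefix_X using fst_lt_of_law_U_prefix_X by fastforce

definition XU_prefix_law :: "nat \<Rightarrow> ('x list \<times> nat list) pmf" where
  "XU_prefix_law j = map_pmf (\<lambda>(x, u). (x, take j u)) (XU_law p n q)"

lemma XU_prefix_law_Suc:
  "j < 2^n \<Longrightarrow> XU_prefix_law (Suc j) = map_pmf (\<lambda>(a, w, x). (x, w @ [a])) (law_U_prefix_X p n q j)"
  unfolding XU_prefix_law_def law_U_prefix_X_def map_pmf_comp
  by (rule map_pmf_cong) (auto simp: take_Suc_conv_app_nth dest!: length_of_XU_law)

lemma map_snd_law_U_prefix_X:
  "map_pmf snd (law_U_prefix_X p n q j) = map_pmf (\<lambda>(x, w). (w, x)) (XU_prefix_law j)"
  unfolding XU_prefix_law_def law_U_prefix_X_def map_pmf_comp by (simp add: split_beta)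

lemma XU_prefix_law_full: "XU_prefix_law (2^n) = XU_law p n q"
proof -
  have "XU_prefix_law (2^n) = map_pmf id (XU_law p n q)"
    unfolding XU_prefix_law_def by (rule map_pmf_cong) (auto dest: length_of_XU_law)
  thus ?thesis by simp
qed

lemma XU_prefix_law_0: "XU_prefix_law 0 = map_pmf (\<lambda>x. (x, [])) (iid_pmf (2^n) (map_pmf fst q))"
proof -
  have "XU_prefix_law 0 = map_pmf (\<lambda>x. (x, [])) (map_pmf fst (XU_law p n q))"
    unfolding XU_prefix_law_def map_pmf_comp by (rule map_pmf_cong) auto
  thus ?thesis by (simp add: map_fst_XU_law)
qed

lemma ln_pmf_XU_law_chain_rule:
  assumes xu: "(x, u) \<in> set_pmf (XU_law p n q)"
  shows "ln (pmf (XU_law p n q) (x, u)) = ln (pmf (iid_pmf (2^n) (map_pmf fst q)) x)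
           + (\<Sum>j<2^n. ln (cond_prob_pmf (law_U_prefix_X p n q j) (u ! j, take j u, x)))"
proof -
  define f where "f j = ln (pmf (XU_prefix_law j) (x, take j u))" for j
  have inj_Pair_Nil: "inj (\<lambda>x :: 'x list. (x, [] :: nat list))"
    by (simp add: inj_def)
  have pos: "pmf (XU_prefix_law j) (x, take j u) > 0" for j
    using xu unfolding XU_prefix_law_def by (force intro: pmf_positive)
  have "ln (cond_prob_pmf (law_U_prefix_X p n q j) (u ! j, take j u, x)) = f (Suc j) - f j" if j: "j < 2^n" for j
  proof -
    have inj: "inj (\<lambda>(a, w, x). (x, w @ [a]))"
      by (auto simp: inj_def)
    have "pmf (law_U_prefix_X p n q j) (u ! j, take j u, x) = pmf (XU_prefix_law (Suc j)) (x, take (Suc j) u)"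
      using j length_of_XU_law[OF xu] pmf_map_inj'[OF inj, of "law_U_prefix_X p n q j" "(u ! j, take j u, x)"]
      by (simp add: XU_prefix_law_Suc take_Suc_conv_app_nth)
    moreover have "pmf (map_pmf snd (law_U_prefix_X p n q j)) (take j u, x) = pmf (XU_prefix_law j) (x, take j u)"
      unfolding map_snd_law_U_prefix_X
      using pmf_map_inj'[of "\<lambda>(x, w). (w, x)" _ "(x, take j u)"] by (simp add: inj_def)
    ultimately show ?thesis
      using pos[of j] pos[of "Suc j"] by (simp add: cond_prob_pmf_def f_def ln_div)
  qed
  hence "(\<Sum>j<2^n. ln (cond_prob_pmf (law_U_prefix_X p n q j) (u ! j, take j u, x))) = (\<Sum>j<2^n. f (Suc j) - f j)"
    by simp
  also have "\<dots> = f (2^n) - f 0"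
    by (rule sum_lessThan_telescope)
  also have "f (2^n) = ln (pmf (XU_law p n q) (x, u))"
    unfolding f_def XU_prefix_law_full using length_of_XU_law[OF xu] by simp
  also have "f 0 = ln (pmf (iid_pmf (2^n) (map_pmf fst q)) x)"
    unfolding f_def XU_prefix_law_0 take_0 pmf_map_inj'[OF inj_Pair_Nil] ..
  finally show ?thesis by simp
qed

lemma set_pmf_sample_U_subset:
  assumes "c \<in> PiE (V_set p n \<beta> q) (\<lambda>_. {..<p})" "m \<le> 2^n" "u \<in> set_pmf (sample_U p n \<beta> q c x m)"
  shows "set u \<subseteq> {..<p}"
  using assms(2,3)
proof (induction m arbitrary: u)
  case (Suc m)
  then obtain w v where u: "u = w @ [v]" and w: "w \<in> set_pmf (sample_U p n \<beta> q c x m)"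
    and v: "v \<in> set_pmf (step_kernel p n \<beta> q c x m w)"
    unfolding sample_U_Suc_step_kernel by auto
  have m: "m < 2^n" using Suc.prems(1) by simp
  have "v < p"
  proof (cases "m \<in> V_set p n \<beta> q")
    case True
    thus ?thesis using v assms(1) by (auto simp: step_kernel_def PiE_iff)
  next
    case False
    hence "v = 0 \<or> (v, w, x) \<in> set_pmf (law_U_prefix_X p n q m) \<or> (v, w) \<in> set_pmf (law_U_prefix p n q m)"
      using v unfolding step_kernel_def by (auto split: if_splits dest: set_pmf_cond_dist)
    thus ?thesis
      using p fst_lt_of_law_U_prefix_X[OF _ m] fst_lt_of_law_U_prefix[OF _ m] by force
  qed
  thus ?case using Suc.IH[OF _ w] Suc.prems(1) u by simp
qed simp

lemma set_pmf_scheme_XU_law_subset: "set_pmf (scheme_XU_law p n \<beta> q) \<subseteq> XU_space p n"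
proof
  fix z
  assume "z \<in> set_pmf (scheme_XU_law p n \<beta> q)"
  moreover have "finite (PiE (V_set p n \<beta> q) (\<lambda>_. {..<p}))"
    by (intro finite_PiE finite_V_set) simp
  moreover have "PiE (V_set p n \<beta> q) (\<lambda>_. {..<p}) \<noteq> {}"
    using p by (auto simp: PiE_eq_empty_iff)
  ultimately obtain c x u where "c \<in> PiE (V_set p n \<beta> q) (\<lambda>_. {..<p})"
    "x \<in> set_pmf (iid_pmf (2^n) (map_pmf fst q))" "u \<in> set_pmf (sample_U p n \<beta> q c x (2^n))" "z = (x, u)"
    unfolding scheme_XU_law_def encoder_XU_law_def by auto
  thus "z \<in> XU_space p n"
    using set_pmf_iid_pmf length_set_pmf_sample_U set_pmf_sample_U_subset[of _ "2^n"]
    by (auto simp: XU_space_def)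
qed

lemma finite_set_pmf_scheme_XU_law: "finite (set_pmf (scheme_XU_law p n \<beta> q))"
  using set_pmf_scheme_XU_law_subset finite_XU_space by (rule finite_subset)

lemma step_weight_on_law_U_prefix_X:
  assumes z: "z \<in> set_pmf (law_U_prefix_X p n q j)" and j: "j < 2^n"
  shows "step_weight p n \<beta> q j z =
     (if j \<in> V_set p n \<beta> q then 1 / real p
      else if j \<in> H_set p n \<beta> q then cond_prob_pmf (law_U_prefix_X p n q j) z
      else cond_prob_pmf (law_U_prefix p n q j) (fst z, fst (snd z)))"
proof -
  obtain a w x where z_eq: "z = (a, w, x)"
    by (cases z) auto
  have "(a, w) \<in> set_pmf (law_U_prefix p n q j)"
    using mem_law_U_prefix_of_law_U_prefix_X[OF z] by (simp add: z_eq)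
  hence "w \<in> snd ` set_pmf (law_U_prefix p n q j)"
    by force
  moreover have "(w, x) \<in> snd ` set_pmf (law_U_prefix_X p n q j)"
    using z unfolding z_eq by force
  moreover have "a < p"
    using fst_lt_of_law_U_prefix_X[OF z j] by (simp add: z_eq)
  ultimately show ?thesis
    by (simp add: step_weight_def z_eq pmf_cond_dist)
qed

lemma step_weight_pos:
  "z \<in> set_pmf (law_U_prefix_X p n q j) \<Longrightarrow> j < 2^n \<Longrightarrow> step_weight p n \<beta> q j z > 0"
  using p by (auto simp: step_weight_on_law_U_prefix_X intro!: cond_prob_pmf_pos mem_law_U_prefix_of_law_U_prefix_X)

lemma pmf_scheme_XU_law_pos:
  assumes xu: "(x, u) \<in> set_pmf (XU_law p n q)"
  shows "pmf (scheme_XU_law p n \<beta> q) (x, u) > 0"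
proof -
  have "x \<in> set_pmf (iid_pmf (2^n) (map_pmf fst q))"
    using xu by (rule mem_iid_pmf_of_XU_law)
  moreover have "(\<Prod>j<2^n. step_weight p n \<beta> q j (u ! j, take j u, x)) > 0"
    using step_weight_pos[OF mem_law_U_prefix_X[OF xu]] by (intro prod_pos) simp
  ultimately show ?thesis
    using length_of_XU_law[OF xu] by (simp add: pmf_scheme_XU_law[OF p] pmf_positive)
qed

lemma ln_pmf_ratio_XU_scheme:
  assumes xu: "(x, u) \<in> set_pmf (XU_law p n q)"
  shows "ln (pmf (XU_law p n q) (x, u) / pmf (scheme_XU_law p n \<beta> q) (x, u)) =
     (\<Sum>j<2^n. ln (cond_prob_pmf (law_U_prefix_X p n q j) (u ! j, take j u, x))
               - ln (step_weight p n \<beta> q j (u ! j, take j u, x)))"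
proof -
  let ?I = "iid_pmf (2^n) (map_pmf fst q)"
  have I: "pmf ?I x > 0"
    using mem_iid_pmf_of_XU_law[OF xu] by (rule pmf_positive)
  have w: "step_weight p n \<beta> q j (u ! j, take j u, x) > 0" if "j < 2^n" for j
    using step_weight_pos[OF mem_law_U_prefix_X[OF xu] that] .
  have "(\<Prod>j<2^n. step_weight p n \<beta> q j (u ! j, take j u, x)) > 0"
    using w by (intro prod_pos) simp
  moreover have "ln (\<Prod>j<2^n. step_weight p n \<beta> q j (u ! j, take j u, x)) =
                 (\<Sum>j<2^n. ln (step_weight p n \<beta> q j (u ! j, take j u, x)))"
    using w by (intro ln_prod) (simp_all add: less_imp_neq[symmetric])
  ultimately have "ln (pmf (scheme_XU_law p n \<beta> q) (x, u)) =
        ln (pmf ?I x) + (\<Sum>j<2^n. ln (step_weight p n \<beta> q j (u ! j, take j u, x)))"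
    using length_of_XU_law[OF xu] I by (simp add: pmf_scheme_XU_law[OF p] ln_mult_pos)
  moreover have "pmf (XU_law p n q) (x, u) > 0"
    using xu by (simp add: pmf_positive)
  ultimately show ?thesis
    using pmf_scheme_XU_law_pos[OF xu]
    by (simp add: ln_div ln_pmf_XU_law_chain_rule[OF xu] sum_subtractf)
qed

lemma KL_XU_scheme_eq_sum:
  "KL_pmf (XU_law p n q) (scheme_XU_law p n \<beta> q) = (\<Sum>j<2^n. step_divergence p n \<beta> q j)"
proof -
  let ?D = "\<lambda>j z. ln (cond_prob_pmf (law_U_prefix_X p n q j) z) - ln (step_weight p n \<beta> q j z)"
  let ?\<pi> = "\<lambda>j (x, u). (u ! j, take j u, x)"
  have "KL_pmf (XU_law p n q) (scheme_XU_law p n \<beta> q) =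
        measure_pmf.expectation (XU_law p n q) (\<lambda>z. \<Sum>j<2^n. ?D j (?\<pi> j z))"
    unfolding KL_pmf_def
    by (rule expectation_pmf_cong[OF finite_set_pmf_XU_law]) (auto simp: ln_pmf_ratio_XU_scheme)
  also have "\<dots> = (\<Sum>j<2^n. measure_pmf.expectation (XU_law p n q) (\<lambda>z. ?D j (?\<pi> j z)))"
    by (rule expectation_pmf_sum[OF finite_set_pmf_XU_law])
  also have "\<dots> = (\<Sum>j<2^n. step_divergence p n \<beta> q j)"
    unfolding step_divergence_def law_U_prefix_X_def by simp
  finally show ?thesis .
qed

lemma step_divergence_V_set:
  assumes "j \<in> V_set p n \<beta> q" "j < 2^n"
  shows "step_divergence p n \<beta> q j < ln 2 * delta n \<beta>"
proof -
  let ?L = "law_U_prefix_X p n q j"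
  note fin = finite_set_pmf_law_U_prefix_X
  have "step_divergence p n \<beta> q j = measure_pmf.expectation ?L (\<lambda>z. ln (cond_prob_pmf ?L z) + ln (real p))"
    unfolding step_divergence_def using p assms
    by (intro expectation_pmf_cong[OF fin]) (simp add: step_weight_on_law_U_prefix_X ln_div)
  also have "\<dots> = - ln 2 * cond_entropy ?L + ln (real p)"
    by (simp add: expectation_pmf_add_const[OF fin] expectation_ln_cond_prob_pmf[OF fin])
  also have "\<dots> < ln 2 * delta n \<beta>"
  proof -
    have "cond_entropy ?L > log 2 (real p) - delta n \<beta>"
      using assms(1) unfolding V_set_def by simp
    hence "ln 2 * cond_entropy ?L > ln 2 * (log 2 (real p) - delta n \<beta>)"
      by simp
    thus ?thesis by (simp add: log_def algebra_simps)
  qed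
  finally show ?thesis .
qed

lemma step_divergence_H_set:
  assumes "j \<notin> V_set p n \<beta> q" "j \<in> H_set p n \<beta> q" "j < 2^n"
  shows "step_divergence p n \<beta> q j = 0"
proof -
  have "step_divergence p n \<beta> q j = measure_pmf.expectation (law_U_prefix_X p n q j) (\<lambda>_. 0)"
    unfolding step_divergence_def using assms
    by (intro expectation_pmf_cong[OF finite_set_pmf_law_U_prefix_X]) (simp add: step_weight_on_law_U_prefix_X)
  thus ?thesis by simp
qed

lemma step_divergence_not_H_set:
  assumes "j \<notin> V_set p n \<beta> q" "j \<notin> H_set p n \<beta> q" "j < 2^n"
  shows "step_divergence p n \<beta> q j \<le> ln 2 * delta n \<beta>"
proof -
  let ?L = "law_U_prefix_X p n q j"
  let ?M = "law_U_prefix p n q j"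
  have "step_divergence p n \<beta> q j \<le> measure_pmf.expectation ?L (\<lambda>z. - ln (cond_prob_pmf ?M (fst z, fst (snd z))))"
    unfolding step_divergence_def
  proof (rule expectation_pmf_mono[OF finite_set_pmf_law_U_prefix_X])
    fix z
    assume z: "z \<in> set_pmf ?L"
    have "ln (cond_prob_pmf ?L z) \<le> 0"
      using cond_prob_pmf_pos[OF z] cond_prob_pmf_le_1[of ?L z] by simp
    thus "ln (cond_prob_pmf ?L z) - ln (step_weight p n \<beta> q j z) \<le> - ln (cond_prob_pmf ?M (fst z, fst (snd z)))"
      using assms z by (simp add: step_weight_on_law_U_prefix_X)
  qed
  also have "\<dots> = - measure_pmf.expectation ?M (\<lambda>z. ln (cond_prob_pmf ?M z))"
    unfolding law_U_prefix_eq_map_law_U_prefix_X[of p n q j] by (simp add: split_beta)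
  also have "\<dots> = ln 2 * cond_entropy ?M"
    by (simp add: expectation_ln_cond_prob_pmf[OF finite_set_pmf_law_U_prefix])
  also have "\<dots> \<le> ln 2 * delta n \<beta>"
    using assms unfolding H_set_def by simp
  finally show ?thesis .
qed

lemma step_divergence_le: "j < 2^n \<Longrightarrow> step_divergence p n \<beta> q j \<le> ln 2 * delta n \<beta>"
  using step_divergence_V_set step_divergence_H_set step_divergence_not_H_set
  by (cases "j \<in> V_set p n \<beta> q"; cases "j \<in> H_set p n \<beta> q") (auto simp: delta_def less_imp_le)

lemma var_dist_XU_scheme_le:
  "var_dist (XU_law p n q) (scheme_XU_law p n \<beta> q) \<le> sqrt (2 * ln 2) * sqrt (real (2^n) * delta n \<beta>)"
proof -
  have "set_pmf (XU_law p n q) \<subseteq> set_pmf (scheme_XU_law p n \<beta> q)"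
  proof (rule subrelI)
    fix x u
    assume "(x, u) \<in> set_pmf (XU_law p n q)"
    hence "pmf (scheme_XU_law p n \<beta> q) (x, u) > 0"
      by (rule pmf_scheme_XU_law_pos)
    thus "(x, u) \<in> set_pmf (scheme_XU_law p n \<beta> q)"
      by (simp add: set_pmf_iff)
  qed
  hence "var_dist (XU_law p n q) (scheme_XU_law p n \<beta> q) \<le>
         sqrt (2 * KL_pmf (XU_law p n q) (scheme_XU_law p n \<beta> q))"
    by (rule pinsker_pmf[OF finite_set_pmf_scheme_XU_law])
  moreover have "KL_pmf (XU_law p n q) (scheme_XU_law p n \<beta> q) \<le> (\<Sum>j<(2::nat)^n. ln 2 * delta n \<beta>)"
    unfolding KL_XU_scheme_eq_sum by (intro sum_mono step_divergence_le) simp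
  ultimately show ?thesis
    by (simp add: real_sqrt_mult[symmetric] algebra_simps order_trans)
qed

end

theorem lemma6:
  fixes q :: "('x::finite \<times> nat) pmf" and p n k i :: nat and \<beta> :: real
  assumes "prime p"
    and "set_pmf q \<subseteq> UNIV \<times> {..<p}"
    and "0 < \<beta>" and "\<beta> < 1/2"
    and "1 \<le> i" and "i \<le> k"
  shows "var_dist (target_law n q) (block_law p n \<beta> q k i)
           \<le> sqrt (2 * ln 2) * sqrt (real (2^n) * delta n \<beta>)"
proof -
  \<comment> \<open>Primality is only used through \<open>p > 0\<close>, and the bound holds for every \<open>\<beta>\<close>.\<close>
  have p: "p > 0"
    using assms(1) by (rule prime_gt_0_nat)
  have "var_dist (target_law n q) (block_law p n \<beta> q k i) =
        var_dist (map_pmf (\<lambda>(x, u). (x, polar_inverse p n u)) (XU_law p n q))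
                 (map_pmf (\<lambda>(x, u). (x, polar_inverse p n u)) (scheme_XU_law p n \<beta> q))"
    by (simp only: target_law_eq_map_XU_law[OF p assms(2)] block_law_eq_map_scheme_XU_law[OF assms(5,6)])
  also have "\<dots> \<le> var_dist (XU_law p n q) (scheme_XU_law p n \<beta> q)"
    using p by (intro var_dist_map_pmf_le finite_set_pmf_XU_law finite_set_pmf_scheme_XU_law)
  also have "\<dots> \<le> sqrt (2 * ln 2) * sqrt (real (2^n) * delta n \<beta>)"
    using p by (rule var_dist_XU_scheme_le)
  finally show ?thesis .
qed

end
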